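(* Let $q\in\,]0,1[$, $\omega\ge0$, let $I$ be an interval containing $\omega_0:=\omega/(1-q)$, $a,b\in I$ with $a<b$, $\alpha,\beta\in\mathbb{R}$, and $L:I\times\mathbb{R}\times\mathbb{R}\to\mathbb{R}$. Let $\eta$ be an admissible variation and $y$ an admissible function, and set $$g(t,\epsilon):=L\bigl(t,\,y(\sigma(t))+\epsilon\eta(\sigma(t)),\,\tilde D_{q,\omega}[y](t)+\epsilon\tilde D_{q,\omega}[\eta](t)\bigr).$$ Assume that (1) $g(t,\cdot)$ is differentiable at $0$ uniformly in $[a,b]_{q,\omega}$; (2) $\mathcal{L}_\xi(y+\epsilon\eta):=\int_{\omega_0}^{\xi}g(t,\epsilon)\,\tilde d_{q,\omega}t$, $\xi\in\{a,b\}$, exist for $\epsilon$ near $0$; (3) $\int_{\omega_0}^a\partial_2 g(t,0)\,\tilde d_{q,\omega}t$ and $\int_{\omega_0}^b\partial_2 g(t,0)\,\tilde d_{q,\omega}t$ exist. Then $\phi(\epsilon):=\mathcal{L}(y+\epsilon\eta)$ is differentiable at $0$ and $$\phi'(0)=\int_a^b\Bigl[\partial_2L\bigl(t,y(\sigma(t)),\tilde D_{q,\omega}[y](t)\bigr)\eta(\sigma(t))+\partial_3L\bigl(t,y(\sigma(t)),\tilde D_{q,\omega}[y](t)\bigr)\tilde D_{q,\omega}[\eta](t)\Bigr]\tilde d_{q,\omega}t.$$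
   Context: $\sigma(t):=qt+\omega$, $\sigma^{-1}(t):=q^{-1}(t-\omega)$, $\sigma^k$ the $k$-fold composition. Hahn symmetric derivative: for $t\neq\omega_0$, $\tilde D_{q,\omega}[f](t):=\frac{f(\sigma(t))-f(\sigma^{-1}(t))}{\sigma(t)-\sigma^{-1}(t)}$; $\tilde D_{q,\omega}[f](\omega_0):=f'(\omega_0)$ (classical). Hahn symmetric integral: $\int_{\omega_0}^x F\,\tilde d_{q,\omega}t:=(\sigma^{-1}(x)-\sigma(x))\sum_{n\ge0}q^{2n+1}F(\sigma^{2n+1}(x))$, $\int_a^bF\,\tilde d_{q,\omega}t:=\int_{\omega_0}^bF\,\tilde d_{q,\omega}t-\int_{\omega_0}^aF\,\tilde d_{q,\omega}t$. $[s]_{q,\omega}:=\{\sigma^{2n+1}(s):n\in\mathbb{N}_0\}\cup\{\omega_0\}$, $[a,b]_{q,\omega}:=[a]_{q,\omega}\cup[b]_{q,\omega}$. $\mathcal{Y}^1([a,b]_{q,\omega},\mathbb{R})$: functions $y:I\to\mathbb{R}$ such that $y$ and $\tilde D_{q,\omega}[y]$ are bounded on $[a,b]_{q,\omega}$ and continuous at $\omega_0$. $\mathcal{L}(y):=\int_a^bL(t,y(\sigma(t)),\tilde D_{q,\omega}[y](t))\,\tilde d_{q,\omega}t$. An admissible function is $y\in\mathcal{Y}^1([a,b]_{q,\omega},\mathbb{R})$ with $y(a)=\alpha$, $y(b)=\beta$; an admissible variation is $\eta\in\mathcal{Y}^1([a,b]_{q,\omega},\mathbb{R})$ with $\eta(a)=\eta(b)=0$.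 "$g(t,\cdot)$ differentiable at $0$ uniformly in $[a,b]_{q,\omega}$" means: for every $\varepsilon>0$ there is $\delta>0$ with $\left|\frac{g(t,\epsilon)-g(t,0)}{\epsilon}-\partial_2g(t,0)\right|<\varepsilon$ for all $0<|\epsilon|<\delta$ and all $t\in[a,b]_{q,\omega}$. $\partial_jL$ is the partial derivative of $L$ in its $j$-th argument.
   Formalization: For every $t\in[a,b]_{q,\omega}$ the function L(t,.,.) is also jointly (Frechet) differentiable, as a function of two real variables, at the point $(y(\sigma(t)),\tilde D_{q,\omega}[y](t))$. The paper assumes this as well. *)

theory Defs
  imports "HOL-Analysis.Analysis"
begin

definition hsigma :: "real \<Rightarrow> real \<Rightarrow> real \<Rightarrow> real" where
  "hsigma q \<omega> t = q * t + \<omega>"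

definition hsigma_inv :: "real \<Rightarrow> real \<Rightarrow> real \<Rightarrow> real" where
  "hsigma_inv q \<omega> t = (t - \<omega>) / q"

definition homega0 :: "real \<Rightarrow> real \<Rightarrow> real" where
  "homega0 q \<omega> = \<omega> / (1 - q)"

definition hsd :: "real \<Rightarrow> real \<Rightarrow> real set \<Rightarrow> (real \<Rightarrow> real) \<Rightarrow> real \<Rightarrow> real" where
  "hsd q \<omega> I f t =
     (if t = homega0 q \<omega> then (THE D. (f has_real_derivative D) (at t within I))
      else (f (hsigma q \<omega> t) - f (hsigma_inv q \<omega> t)) / (hsigma q \<omega> t - hsigma_inv q \<omega> t))"

definition hsi_series :: "real \<Rightarrow> real \<Rightarrow> (real \<Rightarrow> real) \<Rightarrow> real \<Rightarrow> nat \<Rightarrow> real" where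
  "hsi_series q \<omega> F x n = q ^ (2*n+1) * F ((hsigma q \<omega> ^^ (2*n+1)) x)"

definition hsi_exists :: "real \<Rightarrow> real \<Rightarrow> (real \<Rightarrow> real) \<Rightarrow> real \<Rightarrow> bool" where
  "hsi_exists q \<omega> F x \<longleftrightarrow> summable (hsi_series q \<omega> F x)"

definition hsi0 :: "real \<Rightarrow> real \<Rightarrow> (real \<Rightarrow> real) \<Rightarrow> real \<Rightarrow> real" where
  "hsi0 q \<omega> F x = (hsigma_inv q \<omega> x - hsigma q \<omega> x) * (\<Sum>n. hsi_series q \<omega> F x n)"

definition hsi :: "real \<Rightarrow> real \<Rightarrow> (real \<Rightarrow> real) \<Rightarrow> real \<Rightarrow> real \<Rightarrow> real" where
  "hsi q \<omega> F a b = hsi0 q \<omega> F b - hsi0 q \<omega> F a"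

definition hpoints :: "real \<Rightarrow> real \<Rightarrow> real \<Rightarrow> real set" where
  "hpoints q \<omega> s = {(hsigma q \<omega> ^^ (2*n+1)) s | n. True} \<union> {homega0 q \<omega>}"

definition hinterval :: "real \<Rightarrow> real \<Rightarrow> real \<Rightarrow> real \<Rightarrow> real set" where
  "hinterval q \<omega> a b = hpoints q \<omega> a \<union> hpoints q \<omega> b"

definition hY1 :: "real \<Rightarrow> real \<Rightarrow> real set \<Rightarrow> real \<Rightarrow> real \<Rightarrow> (real \<Rightarrow> real) \<Rightarrow> bool" where
  "hY1 q \<omega> I a b y \<longleftrightarrow>
     bounded (y ` hinterval q \<omega> a b) \<and> bounded (hsd q \<omega> I y ` hinterval q \<omega> a b) \<and>
     continuous (at (homega0 q \<omega>) within I) y \<and>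
     continuous (at (homega0 q \<omega>) within I) (hsd q \<omega> I y)"

definition admissible_function ::
  "real \<Rightarrow> real \<Rightarrow> real set \<Rightarrow> real \<Rightarrow> real \<Rightarrow> real \<Rightarrow> real \<Rightarrow> (real \<Rightarrow> real) \<Rightarrow> bool" where
  "admissible_function q \<omega> I a b \<alpha> \<beta> y \<longleftrightarrow> hY1 q \<omega> I a b y \<and> y a = \<alpha> \<and> y b = \<beta>"

definition admissible_variation ::
  "real \<Rightarrow> real \<Rightarrow> real set \<Rightarrow> real \<Rightarrow> real \<Rightarrow> (real \<Rightarrow> real) \<Rightarrow> bool" where
  "admissible_variation q \<omega> I a b \<eta> \<longleftrightarrow> hY1 q \<omega> I a b \<eta> \<and> \<eta> a = 0 \<and> \<eta> b = 0"

definition hfunctional ::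
  "real \<Rightarrow> real \<Rightarrow> real set \<Rightarrow> (real \<Rightarrow> real \<Rightarrow> real \<Rightarrow> real) \<Rightarrow> real \<Rightarrow> real \<Rightarrow> (real \<Rightarrow> real) \<Rightarrow> real" where
  "hfunctional q \<omega> I L a b y = hsi q \<omega> (\<lambda>t. L t (y (hsigma q \<omega> t)) (hsd q \<omega> I y t)) a b"

definition partial2 :: "(real \<Rightarrow> real \<Rightarrow> real \<Rightarrow> real) \<Rightarrow> real \<Rightarrow> real \<Rightarrow> real \<Rightarrow> real" where
  "partial2 L t u v = deriv (\<lambda>u'. L t u' v) u"

definition partial3 :: "(real \<Rightarrow> real \<Rightarrow> real \<Rightarrow> real) \<Rightarrow> real \<Rightarrow> real \<Rightarrow> real \<Rightarrow> real" where
  "partial3 L t u v = deriv (\<lambda>v'. L t u v') v"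

definition unif_diff_at0 :: "(real \<Rightarrow> real \<Rightarrow> real) \<Rightarrow> real set \<Rightarrow> bool" where
  "unif_diff_at0 g S \<longleftrightarrow>
     (\<forall>e>0. \<exists>\<delta>>0. \<forall>\<epsilon>. 0 < \<bar>\<epsilon>\<bar> \<and> \<bar>\<epsilon>\<bar> < \<delta> \<longrightarrow>
        (\<forall>t\<in>S. \<bar>(g t \<epsilon> - g t 0) / \<epsilon> - deriv (g t) 0\<bar> < e))"

end

theory Submission imports Defs begin

text \<open>Each integral from \<open>\<omega>\<^sub>0\<close> to \<open>\<xi>\<close> is a series with the geometric weights
  \<open>q\<^sup>2\<^sup>n\<^sup>+\<^sup>1\<close>, so the uniform differentiability of \<open>g(t,\<cdot>)\<close> at \<open>0\<close>
  lets one differentiate it term by term; the chain rule for the differentiable map \<open>L(t,\<cdot>,\<cdot>)\<close>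
  then identifies \<open>\<partial>\<^sub>\<epsilon>g(t,0)\<close> with the integrand on the right.
  The Hahn derivative is linear only away from \<open>\<omega>\<^sub>0\<close> (there it is a classical derivative,
  which need not exist), but the series never samples \<open>\<omega>\<^sub>0\<close>.\<close>

lemma has_real_derivative_along_line:
  fixes F :: "real \<times> real \<Rightarrow> real"
  assumes "(F has_derivative D) (at (p + x *\<^sub>R d))"
  shows "((\<lambda>e. F (p + e *\<^sub>R d)) has_real_derivative D d) (at x)"
proof -
  have line: "((\<lambda>e. p + e *\<^sub>R d) has_derivative (\<lambda>h. h *\<^sub>R d)) (at x)"
    by (auto intro!: derivative_eq_intros)
  have "((\<lambda>e. F (p + e *\<^sub>R d)) has_derivative (\<lambda>h. D (h *\<^sub>R d))) (at x)"
    using has_derivative_compose[OF line assms] .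
  moreover have "(\<lambda>h. D (h *\<^sub>R d)) = (*) (D d)"
    using linear_cmul[OF has_derivative_linear[OF assms]] by (auto simp: mult.commute)
  ultimately show ?thesis
    unfolding has_field_derivative_def by simp
qed

lemma deriv_along_line_eq_partials:
  fixes L :: "real \<Rightarrow> real \<Rightarrow> real"
  assumes "(\<lambda>(u, v). L u v) differentiable (at (Y, V))"
  shows "deriv (\<lambda>e. L (Y + e * E) (V + e * W)) 0 =
         deriv (\<lambda>u. L u V) Y * E + deriv (\<lambda>v. L Y v) V * W"
proof -
  obtain D where D: "((\<lambda>(u, v). L u v) has_derivative D) (at (Y, V))"
    using assms unfolding differentiable_def by blast
  have "((\<lambda>e. L (Y + e * E) (V + e * W)) has_real_derivative D (E, W)) (at 0)"
    using has_real_derivative_along_line[of "\<lambda>(u, v). L u v" D "(Y, V)" 0 "(E, W)"] D by simp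
  moreover have "((\<lambda>u. L u V) has_real_derivative D (1, 0)) (at Y)"
    using has_real_derivative_along_line[of "\<lambda>(u, v). L u v" D "(0, V)" Y "(1, 0)"] D by simp
  moreover have "((\<lambda>v. L Y v) has_real_derivative D (0, 1)) (at V)"
    using has_real_derivative_along_line[of "\<lambda>(u, v). L u v" D "(Y, 0)" V "(0, 1)"] D by simp
  moreover have "D (E, W) = E * D (1, 0) + W * D (0, 1)"
  proof -
    have lin: "linear D" using D by (rule has_derivative_linear)
    have "D (E, W) = D (E *\<^sub>R (1, 0) + W *\<^sub>R (0, 1))" by simp
    also have "\<dots> = E * D (1, 0) + W * D (0, 1)"
      by (simp only: linear_add[OF lin] linear_cmul[OF lin] real_scaleR_def)
    finally show ?thesis .
  qed
  ultimately show ?thesis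
    by (simp add: DERIV_imp_deriv mult.commute)
qed

lemma has_real_derivative_weighted_suminf:
  fixes w f' :: "nat \<Rightarrow> real" and f :: "nat \<Rightarrow> real \<Rightarrow> real"
  assumes w: "summable (\<lambda>n. \<bar>w n\<bar>)"
    and unif: "\<forall>e>0. \<exists>\<delta>>0. \<forall>\<epsilon>. 0 < \<bar>\<epsilon>\<bar> \<and> \<bar>\<epsilon>\<bar> < \<delta> \<longrightarrow>
                  (\<forall>n. \<bar>(f n \<epsilon> - f n 0) / \<epsilon> - f' n\<bar> < e)"
    and summable_near: "\<exists>\<delta>>0. \<forall>\<epsilon>. \<bar>\<epsilon>\<bar> < \<delta> \<longrightarrow> summable (\<lambda>n. w n * f n \<epsilon>)"
    and summable_deriv: "summable (\<lambda>n. w n * f' n)"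
  shows "((\<lambda>\<epsilon>. \<Sum>n. w n * f n \<epsilon>) has_real_derivative (\<Sum>n. w n * f' n)) (at 0)"
  unfolding has_field_derivative_iff
proof (rule LIM_I)
  fix r :: real assume r: "0 < r"
  define W where "W = (\<Sum>n. \<bar>w n\<bar>)"
  have "W \<ge> 0" unfolding W_def using w by (simp add: suminf_nonneg)
  define e where "e = r / (W + 1)"
  have e: "e > 0"
    using r \<open>W \<ge> 0\<close> by (simp add: e_def)
  have "e * W < e * (W + 1)" using e by (intro mult_strict_left_mono) auto
  also have "\<dots> = r" using \<open>W \<ge> 0\<close> by (simp add: e_def)
  finally have eW: "e * W < r" .
  obtain \<delta>1 where "\<delta>1 > 0" and quot: "\<And>\<epsilon> n. 0 < \<bar>\<epsilon>\<bar> \<Longrightarrow> \<bar>\<epsilon>\<bar> < \<delta>1 \<Longrightarrow>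
        \<bar>(f n \<epsilon> - f n 0) / \<epsilon> - f' n\<bar> < e"
    using unif e by meson
  obtain \<delta>2 where "\<delta>2 > 0" and sm: "\<And>\<epsilon>. \<bar>\<epsilon>\<bar> < \<delta>2 \<Longrightarrow> summable (\<lambda>n. w n * f n \<epsilon>)"
    using summable_near by blast
  show "\<exists>s>0. \<forall>x. x \<noteq> 0 \<and> norm (x - 0) < s \<longrightarrow>
      norm (((\<Sum>n. w n * f n x) - (\<Sum>n. w n * f n 0)) / (x - 0) - (\<Sum>n. w n * f' n)) < r"
  proof (intro exI[of _ "min \<delta>1 \<delta>2"] conjI allI impI)
    show "min \<delta>1 \<delta>2 > 0" using \<open>\<delta>1 > 0\<close> \<open>\<delta>2 > 0\<close> by simp
    fix x :: real assume x: "x \<noteq> 0 \<and> norm (x - 0) < min \<delta>1 \<delta>2"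
    define d where "d n = w n * ((f n x - f n 0) / x - f' n)" for n
    have "(\<lambda>n. (w n * f n x - w n * f n 0) / x - w n * f' n) sums
        (((\<Sum>n. w n * f n x) - (\<Sum>n. w n * f n 0)) / x - (\<Sum>n. w n * f' n))"
      using sm[of x] sm[of 0] x \<open>\<delta>2 > 0\<close> summable_deriv
      by (intro sums_diff sums_divide summable_sums) auto
    moreover have "(\<lambda>n. (w n * f n x - w n * f n 0) / x - w n * f' n) = d"
      using x by (auto simp: d_def field_simps)
    ultimately have d_sum: "((\<Sum>n. w n * f n x) - (\<Sum>n. w n * f n 0)) / x - (\<Sum>n. w n * f' n)
        = suminf d"
      by (simp add: sums_iff)
    have d_bound: "\<bar>d n\<bar> \<le> e * \<bar>w n\<bar>" for n
    proof -
      have "\<bar>(f n x - f n 0) / x - f' n\<bar> \<le> e" using quot[of x n] x by simp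
      then have "\<bar>w n\<bar> * \<bar>(f n x - f n 0) / x - f' n\<bar> \<le> \<bar>w n\<bar> * e"
        by (rule mult_left_mono) simp
      then show ?thesis by (simp add: d_def abs_mult mult.commute)
    qed
    have "summable (\<lambda>n. e * \<bar>w n\<bar>)" using w by (rule summable_mult)
    then have "summable (\<lambda>n. \<bar>d n\<bar>)"
      by (rule summable_comparison_test') (use d_bound in auto)
    then have "\<bar>suminf d\<bar> \<le> (\<Sum>n. \<bar>d n\<bar>)" by (rule summable_rabs)
    also have "\<dots> \<le> (\<Sum>n. e * \<bar>w n\<bar>)"
      using d_bound \<open>summable (\<lambda>n. \<bar>d n\<bar>)\<close> \<open>summable (\<lambda>n. e * \<bar>w n\<bar>)\<close> by (rule suminf_le)
    also have "\<dots> = e * W" unfolding W_def using w by (rule suminf_mult)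
    finally show "norm (((\<Sum>n. w n * f n x) - (\<Sum>n. w n * f n 0)) / (x - 0)
        - (\<Sum>n. w n * f' n)) < r"
      using eW d_sum by simp
  qed
qed

lemma hsigma_funpow:
  assumes "q \<noteq> 1"
  shows "(hsigma q \<omega> ^^ k) x = homega0 q \<omega> + q ^ k * (x - homega0 q \<omega>)"
proof (induction k)
  case 0
  then show ?case by simp
next
  case (Suc k)
  have fixpoint: "q * homega0 q \<omega> + \<omega> = homega0 q \<omega>"
    using assms by (simp add: homega0_def field_simps)
  have "(hsigma q \<omega> ^^ Suc k) x = hsigma q \<omega> ((hsigma q \<omega> ^^ k) x)"
    by simp
  also have "\<dots> = q * (homega0 q \<omega> + q ^ k * (x - homega0 q \<omega>)) + \<omega>"
    by (simp only: Suc.IH hsigma_def)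
  also have "\<dots> = (q * homega0 q \<omega> + \<omega>) + q ^ Suc k * (x - homega0 q \<omega>)"
    by (simp add: algebra_simps)
  finally show ?case using fixpoint by simp
qed

text \<open>The integral from \<open>\<omega>\<^sub>0\<close> to \<open>x\<close> only samples its integrand at the points
  \<open>\<sigma>\<^sup>2\<^sup>n\<^sup>+\<^sup>1(x)\<close>; these avoid \<open>\<omega>\<^sub>0\<close> unless \<open>x = \<omega>\<^sub>0\<close>, where the prefactor vanishes.\<close>
lemma hsi0_cong:
  assumes q: "0 < q" "q < 1"
    and FG: "\<And>n. (hsigma q \<omega> ^^ (2*n+1)) x \<noteq> homega0 q \<omega> \<Longrightarrow>
             F ((hsigma q \<omega> ^^ (2*n+1)) x) = G ((hsigma q \<omega> ^^ (2*n+1)) x)"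
  shows "hsi0 q \<omega> F x = hsi0 q \<omega> G x"
proof (cases "x = homega0 q \<omega>")
  case True
  then have "hsigma_inv q \<omega> x - hsigma q \<omega> x = 0"
    using q by (simp add: hsigma_inv_def hsigma_def homega0_def field_simps)
  then show ?thesis by (simp add: hsi0_def)
next
  case False
  then have "(hsigma q \<omega> ^^ (2*n+1)) x \<noteq> homega0 q \<omega>" for n
    using q hsigma_funpow[where k = "2*n+1"] by simp
  then have "hsi_series q \<omega> F x = hsi_series q \<omega> G x"
    using FG by (auto simp: hsi_series_def)
  then show ?thesis by (simp add: hsi0_def)
qed

lemma has_real_derivative_hsi0:
  fixes g :: "real \<Rightarrow> real \<Rightarrow> real"
  assumes q: "0 < q" "q < 1"
    and S: "\<And>n. (hsigma q \<omega> ^^ (2*n+1)) x \<in> S"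
    and unif: "unif_diff_at0 g S"
    and exists_near: "\<exists>\<delta>>0. \<forall>\<epsilon>. \<bar>\<epsilon>\<bar> < \<delta> \<longrightarrow> hsi_exists q \<omega> (\<lambda>t. g t \<epsilon>) x"
    and exists_deriv: "hsi_exists q \<omega> (\<lambda>t. deriv (g t) 0) x"
  shows "((\<lambda>\<epsilon>. hsi0 q \<omega> (\<lambda>t. g t \<epsilon>) x) has_real_derivative hsi0 q \<omega> (\<lambda>t. deriv (g t) 0) x)
           (at 0)"
proof -
  define t where "t n = (hsigma q \<omega> ^^ (2*n+1)) x" for n
  have "summable (\<lambda>n. \<bar>q ^ (2*n+1)\<bar>)"
    using q by (simp add: power_add power_mult summable_mult2 power_less_one_iff)
  then have "((\<lambda>\<epsilon>. \<Sum>n. q ^ (2*n+1) * g (t n) \<epsilon>) has_real_derivative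
               (\<Sum>n. q ^ (2*n+1) * deriv (g (t n)) 0)) (at 0)"
  proof (rule has_real_derivative_weighted_suminf)
    show "\<forall>e>0. \<exists>\<delta>>0. \<forall>\<epsilon>. 0 < \<bar>\<epsilon>\<bar> \<and> \<bar>\<epsilon>\<bar> < \<delta> \<longrightarrow>
        (\<forall>n. \<bar>(g (t n) \<epsilon> - g (t n) 0) / \<epsilon> - deriv (g (t n)) 0\<bar> < e)"
      using unif S unfolding unif_diff_at0_def t_def by blast
    show "\<exists>\<delta>>0. \<forall>\<epsilon>. \<bar>\<epsilon>\<bar> < \<delta> \<longrightarrow> summable (\<lambda>n. q ^ (2*n+1) * g (t n) \<epsilon>)"
      using exists_near unfolding hsi_exists_def hsi_series_def t_def .
    show "summable (\<lambda>n. q ^ (2*n+1) * deriv (g (t n)) 0)"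
      using exists_deriv unfolding hsi_exists_def hsi_series_def t_def .
  qed
  from DERIV_cmult[OF this, of "hsigma_inv q \<omega> x - hsigma q \<omega> x"]
  show ?thesis unfolding hsi0_def hsi_series_def t_def by simp
qed

lemma hsd_add_scaled:
  assumes "t \<noteq> homega0 q \<omega>"
  shows "hsd q \<omega> I (\<lambda>t. y t + e * \<eta> t) t = hsd q \<omega> I y t + e * hsd q \<omega> I \<eta> t"
proof -
  have "(A + e * B - (C + e * D)) / d = (A - C) / d + e * ((B - D) / d)" for A B C D d :: real
    by (simp add: diff_divide_distrib add_divide_distrib algebra_simps)
  then show ?thesis using assms by (simp add: hsd_def)
qed

theorem lemma3p7:
  fixes q \<omega> a b \<alpha> \<beta> :: real and I :: "real set"
    and L :: "real \<Rightarrow> real \<Rightarrow> real \<Rightarrow> real" and y \<eta> :: "real \<Rightarrow> real"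
    and g :: "real \<Rightarrow> real \<Rightarrow> real"
  assumes q: "0 < q" "q < 1" and om: "\<omega> \<ge> 0"
    and I: "is_interval I" "homega0 q \<omega> \<in> I"
    and ab: "a \<in> I" "b \<in> I" "a < b"
    and eta: "admissible_variation q \<omega> I a b \<eta>"
    and y: "admissible_function q \<omega> I a b \<alpha> \<beta> y"
    and Ldiff: "\<forall>t\<in>hinterval q \<omega> a b.
       (\<lambda>(u, v). L t u v) differentiable (at (y (hsigma q \<omega> t), hsd q \<omega> I y t))"
    and g_def: "\<And>t \<epsilon>. g t \<epsilon> = L t (y (hsigma q \<omega> t) + \<epsilon> * \<eta> (hsigma q \<omega> t))
                                  (hsd q \<omega> I y t + \<epsilon> * hsd q \<omega> I \<eta> t)"
    and h1: "unif_diff_at0 g (hinterval q \<omega> a b)"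
    and h2: "\<exists>\<delta>>0. \<forall>\<epsilon>. \<bar>\<epsilon>\<bar> < \<delta> \<longrightarrow>
               hsi_exists q \<omega> (\<lambda>t. g t \<epsilon>) a \<and> hsi_exists q \<omega> (\<lambda>t. g t \<epsilon>) b"
    and h3: "hsi_exists q \<omega> (\<lambda>t. deriv (g t) 0) a" "hsi_exists q \<omega> (\<lambda>t. deriv (g t) 0) b"
  shows "((\<lambda>\<epsilon>. hfunctional q \<omega> I L a b (\<lambda>t. y t + \<epsilon> * \<eta> t)) has_real_derivative
           hsi q \<omega> (\<lambda>t. partial2 L t (y (hsigma q \<omega> t)) (hsd q \<omega> I y t) * \<eta> (hsigma q \<omega> t)
                       + partial3 L t (y (hsigma q \<omega> t)) (hsd q \<omega> I y t) * hsd q \<omega> I \<eta> t) a b)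
         (at 0)"
proof -
  have mem: "(hsigma q \<omega> ^^ (2*n+1)) x \<in> hinterval q \<omega> a b" if "x = a \<or> x = b" for x n
    using that unfolding hinterval_def hpoints_def by blast
  have functional_eq: "hfunctional q \<omega> I L a b (\<lambda>t. y t + \<epsilon> * \<eta> t) =
      hsi0 q \<omega> (\<lambda>t. g t \<epsilon>) b - hsi0 q \<omega> (\<lambda>t. g t \<epsilon>) a" for \<epsilon>
    unfolding hfunctional_def hsi_def
    by (intro arg_cong2[where f="(-)"] hsi0_cong[OF q]) (simp_all add: hsd_add_scaled g_def)
  have g_eq: "g t = (\<lambda>\<epsilon>. L t (y (hsigma q \<omega> t) + \<epsilon> * \<eta> (hsigma q \<omega> t))
                              (hsd q \<omega> I y t + \<epsilon> * hsd q \<omega> I \<eta> t))" for t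
    using g_def by (rule ext)
  have deriv_g: "deriv (g t) 0 =
      partial2 L t (y (hsigma q \<omega> t)) (hsd q \<omega> I y t) * \<eta> (hsigma q \<omega> t)
      + partial3 L t (y (hsigma q \<omega> t)) (hsd q \<omega> I y t) * hsd q \<omega> I \<eta> t"
    if "t \<in> hinterval q \<omega> a b" for t
    unfolding g_eq partial2_def partial3_def
    by (rule deriv_along_line_eq_partials) (use Ldiff that in blast)
  have integrand_eq: "hsi q \<omega> (\<lambda>t. partial2 L t (y (hsigma q \<omega> t)) (hsd q \<omega> I y t)
          * \<eta> (hsigma q \<omega> t) + partial3 L t (y (hsigma q \<omega> t)) (hsd q \<omega> I y t) * hsd q \<omega> I \<eta> t) a b
     = hsi0 q \<omega> (\<lambda>t. deriv (g t) 0) b - hsi0 q \<omega> (\<lambda>t. deriv (g t) 0) a"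
    unfolding hsi_def by (intro arg_cong2[where f="(-)"] hsi0_cong[OF q]) (metis deriv_g mem)+
  have "((\<lambda>\<epsilon>. hsi0 q \<omega> (\<lambda>t. g t \<epsilon>) x) has_real_derivative hsi0 q \<omega> (\<lambda>t. deriv (g t) 0) x)
          (at 0)" if "x = a \<or> x = b" for x
    by (rule has_real_derivative_hsi0[OF q mem[OF that] h1]) (use that h2 h3 in auto)
  then show ?thesis
    unfolding functional_eq integrand_eq by (intro DERIV_diff) simp_all
qed

end
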